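(* Let $G=(V,E)$ be a graph on $V=\{1,\ldots,n\}$ and $b(\mathbf x)=\sum_{ij\in E}a_{ij}x_ix_j$ with real coefficients. Let $\mathbf x\in\{0,1/2,1\}^n$ and put $T_1=\{i\in V:x_i=1\}$, $T_f=\{i\in V:x_i=1/2\}$. Then \begin{align*} \operatorname{vex}[b](\mathbf x)&=a(\gamma(T_1))+\tfrac12a(\delta(T_1,T_f))+\tfrac12a(\gamma(T_f))-\tfrac12\mu^+(T_f),\\ \operatorname{cav}[b](\mathbf x)&=a(\gamma(T_1))+\tfrac12a(\delta(T_1,T_f))+\tfrac12a(\gamma(T_f))-\tfrac12\mu^-(T_f),\\ \operatorname{chgap}[b](\mathbf x)&=\tfrac12\left(\mu^+(T_f)-\mu^-(T_f)\right). \end{align*}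
   Context: $B=\{(\mathbf x,z)\in[0,1]^n\times\mathbb R:z=b(\mathbf x)\}$; $\operatorname{cav}[b](\mathbf x)=\max\{z:(\mathbf x,z)\in\operatorname{conv}(B)\}$, $\operatorname{vex}[b](\mathbf x)=\min\{z:(\mathbf x,z)\in\operatorname{conv}(B)\}$, $\operatorname{chgap}[b]=\operatorname{cav}[b]-\operatorname{vex}[b]$. For $X\subseteq V$, $\gamma(X)$ is the set of edges of $G$ with both endpoints in $X$; for disjoint $X,Y\subseteq V$, $\delta(X,Y)$ is the set of edges with one endpoint in $X$ and one in $Y$; for $Z\subseteq E$, $a(Z)=\sum_{ij\in Z}a_{ij}$. For $X\subseteq V$, $\mu^+(X)=\max\{a(\delta(U_1,U_2)):U_1\cup U_2=X,\ U_1\cap U_2=\emptyset\}$ and $\mu^-(X)=\min\{a(\delta(U_1,U_2)):U_1\cup U_2=X,\ U_1\cap U_2=\emptyset\}$ (maximum and minimum cut weights in the subgraph induced by $X$, with $U_1$ or $U_2$ allowed to be empty). *)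

theory Defs
  imports "HOL-Analysis.Analysis"
begin

text \<open>Vertices are the elements of the finite index type 'n (playing the role of {1,...,n});
  a point of [0,1]^n is a vector x :: real^'n.  A graph is given by its edge set E,
  a set of 2-element vertex sets; coefficients are a function a on edges.\<close>

definition unit_cube :: "(real^'n) set" where
  "unit_cube = {x. \<forall>i. 0 \<le> x$i \<and> x$i \<le> 1}"

definition fgraph :: "(real^'n \<Rightarrow> real) \<Rightarrow> ((real^'n) \<times> real) set" where
  "fgraph b = {(x, z). x \<in> unit_cube \<and> z = b x}"

definition cav :: "(real^'n \<Rightarrow> real) \<Rightarrow> real^'n \<Rightarrow> real" where
  "cav b x = Sup {z. (x, z) \<in> convex hull (fgraph b)}"

definition vex :: "(real^'n \<Rightarrow> real) \<Rightarrow> real^'n \<Rightarrow> real" where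
  "vex b x = Inf {z. (x, z) \<in> convex hull (fgraph b)}"

definition chgap :: "(real^'n \<Rightarrow> real) \<Rightarrow> real^'n \<Rightarrow> real" where
  "chgap b x = cav b x - vex b x"

definition bilin :: "'n set set \<Rightarrow> ('n set \<Rightarrow> real) \<Rightarrow> real^'n \<Rightarrow> real" where
  "bilin E a x = (\<Sum>e\<in>E. a e * (\<Prod>i\<in>e. x$i))"

definition gamma :: "'n set set \<Rightarrow> 'n set \<Rightarrow> 'n set set" where
  "gamma E X = {e\<in>E. e \<subseteq> X}"

definition delta :: "'n set set \<Rightarrow> 'n set \<Rightarrow> 'n set \<Rightarrow> 'n set set" where
  "delta E X Y = {e\<in>E. \<exists>i\<in>X. \<exists>j\<in>Y. e = {i, j}}"

definition wt :: "('n set \<Rightarrow> real) \<Rightarrow> 'n set set \<Rightarrow> real" where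
  "wt a Z = (\<Sum>e\<in>Z. a e)"

definition mu_plus :: "'n set set \<Rightarrow> ('n set \<Rightarrow> real) \<Rightarrow> 'n set \<Rightarrow> real" where
  "mu_plus E a X = Max {wt a (delta E U1 U2) | U1 U2. U1 \<union> U2 = X \<and> U1 \<inter> U2 = {}}"

definition mu_minus :: "'n set set \<Rightarrow> ('n set \<Rightarrow> real) \<Rightarrow> 'n set \<Rightarrow> real" where
  "mu_minus E a X = Min {wt a (delta E U1 U2) | U1 U2. U1 \<union> U2 = X \<and> U1 \<inter> U2 = {}}"

end

theory Submission
  imports Defs
begin

text \<open>On the face of the cube through x on which the coordinates with x_i \<in> {0, 1} stay fixed,
  b is an affine function minus half of the multilinear cut polynomial
  C(y) = \<Sum>{ij \<in> \<gamma>(T_f)} a_ij (y_i + y_j - 2 y_i y_j): edges leaving T_f have an endpoint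
  fixed at 0 or 1, so their monomials are affine there.  Every point of conv(B) over x is a convex
  combination of graph points over this face, so its height is the affine part at x minus half an
  average of values of C.  A multilinear function on the cube lies between its extreme vertex
  values, and the vertex values of C are the cut weights of T_f, whence the bounds with
  \<mu>^+(T_f) and \<mu>^-(T_f).  Conversely x is the midpoint of the two vertices of the face that cut
  T_f along a given partition, so both bounds are attained.\<close>

lemma edge_doubletonE:
  assumes "\<forall>e\<in>E. card e = 2" "e \<in> E"
  obtains p q where "e = {p, q}" "p \<noteq> q"
proof -
  have "card e = 2" using assms by blast
  then show ?thesis using that by (auto simp: card_2_iff)
qed

lemma doubleton_in_gamma_iff: "{p, q} \<in> E \<Longrightarrow> {p, q} \<in> gamma E S \<longleftrightarrow> p \<in> S \<and> q \<in> S"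
  by (simp add: gamma_def)

lemma doubleton_in_delta_iff:
  "{p, q} \<in> E \<Longrightarrow> {p, q} \<in> delta E X Y \<longleftrightarrow> (p \<in> X \<and> q \<in> Y) \<or> (p \<in> Y \<and> q \<in> X)"
  by (auto simp: delta_def doubleton_eq_iff)

lemma delta_commute: "delta E X Y = delta E Y X"
  unfolding delta_def by (auto simp: insert_commute)

lemma wt_as_indicator_sum:
  assumes "finite F" "Z \<subseteq> F"
  shows "wt a Z = (\<Sum>e\<in>F. if e \<in> Z then a e else 0)"
proof -
  have "{e \<in> F. e \<in> Z} = Z" using assms(2) by blast
  then show ?thesis unfolding wt_def using sum.inter_filter[OF assms(1), of a "\<lambda>e. e \<in> Z"] by simp
qed

definition cut_weights :: "'n set set \<Rightarrow> ('n set \<Rightarrow> real) \<Rightarrow> 'n set \<Rightarrow> real set" where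
  "cut_weights E a X = {wt a (delta E U1 U2) | U1 U2. U1 \<union> U2 = X \<and> U1 \<inter> U2 = {}}"

lemma cut_weights_eq_image: "cut_weights E a X = (\<lambda>U. wt a (delta E U (X - U))) ` Pow X"
proof (intro subset_antisym subsetI)
  fix w assume "w \<in> cut_weights E a X"
  then obtain U1 U2 where w: "w = wt a (delta E U1 U2)" and part: "U1 \<union> U2 = X" "U1 \<inter> U2 = {}"
    unfolding cut_weights_def by blast
  from part have "U2 = X - U1" "U1 \<in> Pow X" by auto
  with w show "w \<in> (\<lambda>U. wt a (delta E U (X - U))) ` Pow X" by simp
next
  fix w assume "w \<in> (\<lambda>U. wt a (delta E U (X - U))) ` Pow X"
  then obtain U where "U \<subseteq> X" "w = wt a (delta E U (X - U))" by blast
  then show "w \<in> cut_weights E a X"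
    unfolding cut_weights_def by (intro CollectI exI[of _ U] exI[of _ "X - U"]) auto
qed

lemma mu_plus_eq_Max: "mu_plus E a X = Max (cut_weights E a X)"
  by (simp add: mu_plus_def cut_weights_def)

lemma mu_minus_eq_Min: "mu_minus E a X = Min (cut_weights E a X)"
  by (simp add: mu_minus_def cut_weights_def)

lemma cut_weight_le_mu_plus:
  fixes X :: "'n::finite set"
  shows "U \<subseteq> X \<Longrightarrow> wt a (delta E U (X - U)) \<le> mu_plus E a X"
  unfolding mu_plus_eq_Max cut_weights_eq_image by (rule Max_ge) auto

lemma mu_minus_le_cut_weight:
  fixes X :: "'n::finite set"
  shows "U \<subseteq> X \<Longrightarrow> mu_minus E a X \<le> wt a (delta E U (X - U))"
  unfolding mu_minus_eq_Min cut_weights_eq_image by (rule Min_le) auto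

lemma mu_plus_attained:
  fixes X :: "'n::finite set"
  obtains U where "U \<subseteq> X" "wt a (delta E U (X - U)) = mu_plus E a X"
proof -
  have "mu_plus E a X \<in> (\<lambda>U. wt a (delta E U (X - U))) ` Pow X"
    unfolding mu_plus_eq_Max cut_weights_eq_image by (rule Max_in) auto
  then show ?thesis using that by auto
qed

lemma mu_minus_attained:
  fixes X :: "'n::finite set"
  obtains U where "U \<subseteq> X" "wt a (delta E U (X - U)) = mu_minus E a X"
proof -
  have "mu_minus E a X \<in> (\<lambda>U. wt a (delta E U (X - U))) ` Pow X"
    unfolding mu_minus_eq_Min cut_weights_eq_image by (rule Min_in) auto
  then show ?thesis using that by auto
qed

definition vec_upd :: "real^'n \<Rightarrow> 'n \<Rightarrow> real \<Rightarrow> real^'n" where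
  "vec_upd y i s = (\<chi> j. if j = i then s else y$j)"

definition char_vec :: "'n set \<Rightarrow> real^'n" where
  "char_vec U = (\<chi> i. if i \<in> U then 1 else 0)"

lemma multiaffine_le_vertex_bound:
  fixes f :: "real^'n::finite \<Rightarrow> real"
  assumes affine: "\<And>y i. f y = (1 - y$i) * f (vec_upd y i 0) + y$i * f (vec_upd y i 1)"
    and vertex: "\<And>U. f (char_vec U) \<le> M"
    and y: "y \<in> unit_cube"
  shows "f y \<le> M"
proof -
  have "\<forall>y\<in>unit_cube. (\<forall>i. i \<notin> F \<longrightarrow> y$i = 0 \<or> y$i = 1) \<longrightarrow> f y \<le> M"
    if "finite F" for F :: "'n set"
    using that
  proof (induction F rule: finite_induct)
    case empty
    show ?case
    proof (intro ballI impI)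
      fix y :: "real^'n"
      assume "\<forall>i. i \<notin> {} \<longrightarrow> y$i = 0 \<or> y$i = 1"
      then have "char_vec {i. y$i = 1} = y" by (auto simp: char_vec_def vec_eq_iff)
      then show "f y \<le> M" using vertex[of "{i. y$i = 1}"] by (simp only:)
    qed
  next
    case (insert i F)
    show ?case
    proof (intro ballI impI)
      fix y :: "real^'n"
      assume y: "y \<in> unit_cube" and binary: "\<forall>j. j \<notin> insert i F \<longrightarrow> y$j = 0 \<or> y$j = 1"
      have "f (vec_upd y i s) \<le> M" if "s = 0 \<or> s = 1" for s
      proof -
        have "vec_upd y i s \<in> unit_cube"
          using y that by (auto simp: unit_cube_def vec_upd_def)
        moreover have "\<forall>j. j \<notin> F \<longrightarrow> vec_upd y i s $ j = 0 \<or> vec_upd y i s $ j = 1"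
          using binary that by (auto simp: vec_upd_def)
        ultimately show ?thesis using insert.IH by blast
      qed
      moreover have "0 \<le> 1 - y$i" "0 \<le> y$i" using y by (auto simp: unit_cube_def)
      ultimately have "(1 - y$i) * f (vec_upd y i 0) + y$i * f (vec_upd y i 1) \<le> M"
        by (intro convex_bound_le) auto
      then show "f y \<le> M" by (subst affine[of y i])
    qed
  qed
  from this[OF finite_class.finite_UNIV] y show ?thesis by simp
qed

lemma multiaffine_ge_vertex_bound:
  fixes f :: "real^'n::finite \<Rightarrow> real"
  assumes affine: "\<And>y i. f y = (1 - y$i) * f (vec_upd y i 0) + y$i * f (vec_upd y i 1)"
    and vertex: "\<And>U. m \<le> f (char_vec U)"
    and y: "y \<in> unit_cube"
  shows "m \<le> f y"
proof -
  have "- f y \<le> - m"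
  proof (rule multiaffine_le_vertex_bound[OF _ _ y])
    show "- f z = (1 - z$i) * - f (vec_upd z i 0) + z$i * - f (vec_upd z i 1)" for z i
      by (subst affine[of z i]) (simp add: algebra_simps)
    show "- f (char_vec U) \<le> - m" for U
      using vertex[of U] by simp
  qed
  then show ?thesis by simp
qed

definition edge_cut :: "real^'n \<Rightarrow> 'n set \<Rightarrow> real" where
  "edge_cut y e = (\<Sum>i\<in>e. y$i) - 2 * (\<Prod>i\<in>e. y$i)"

definition cut_value :: "'n set set \<Rightarrow> ('n set \<Rightarrow> real) \<Rightarrow> 'n set \<Rightarrow> real^'n \<Rightarrow> real" where
  "cut_value E a T y = (\<Sum>e\<in>gamma E T. a e * edge_cut y e)"

lemma edge_cut_affine:
  assumes "card e = 2"
  shows "edge_cut y e = (1 - y$i) * edge_cut (vec_upd y i 0) e + y$i * edge_cut (vec_upd y i 1) e"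
proof -
  obtain p q where "e = {p, q}" "p \<noteq> q" using assms card_2_iff by metis
  then show ?thesis unfolding edge_cut_def vec_upd_def
    by (cases "i = p"; cases "i = q"; simp add: algebra_simps)
qed

lemma cut_value_affine:
  assumes "\<forall>e\<in>E. card e = 2"
  shows "cut_value E a T y
    = (1 - y$i) * cut_value E a T (vec_upd y i 0) + y$i * cut_value E a T (vec_upd y i 1)"
proof -
  have "a e * edge_cut y e
      = (1 - y$i) * (a e * edge_cut (vec_upd y i 0) e) + y$i * (a e * edge_cut (vec_upd y i 1) e)"
    if "e \<in> gamma E T" for e
  proof -
    have "card e = 2" using that assms by (simp add: gamma_def)
    then show ?thesis by (subst edge_cut_affine[of e y i]) (simp_all add: algebra_simps)
  qed
  then show ?thesis unfolding cut_value_def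
    by (simp add: sum_distrib_left sum.distrib)
qed

lemma cut_value_char_vec:
  assumes edges: "\<forall>e\<in>E. card e = 2"
  shows "cut_value E a T (char_vec U) = wt a (delta E (U \<inter> T) (T - U))"
proof -
  have "a e * edge_cut (char_vec U) e = (if e \<in> delta E (U \<inter> T) (T - U) then a e else 0)"
    if e: "e \<in> gamma E T" for e
  proof -
    have "e \<in> E" "e \<subseteq> T" using e by (auto simp: gamma_def)
    moreover obtain p q where pq: "e = {p, q}" "p \<noteq> q"
      using edges \<open>e \<in> E\<close> by (rule edge_doubletonE)
    ultimately show ?thesis
      unfolding pq(1) by (auto simp: edge_cut_def char_vec_def doubleton_in_delta_iff)
  qed
  then have "cut_value E a T (char_vec U)
      = (\<Sum>e\<in>gamma E T. if e \<in> delta E (U \<inter> T) (T - U) then a e else 0)"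
    unfolding cut_value_def by (rule sum.cong[OF refl])
  also have "\<dots> = wt a (delta E (U \<inter> T) (T - U))"
    by (rule wt_as_indicator_sum[symmetric]) (auto simp: gamma_def delta_def)
  finally show ?thesis .
qed

lemma cut_value_bounds:
  assumes "\<forall>e\<in>E. card e = 2" and "y \<in> unit_cube"
  shows "mu_minus E a T \<le> cut_value E a T y" and "cut_value E a T y \<le> mu_plus E a T"
proof -
  have vertex: "cut_value E a T (char_vec U) = wt a (delta E (U \<inter> T) (T - (U \<inter> T)))" for U
  proof -
    have "T - (U \<inter> T) = T - U" by blast
    then show ?thesis using cut_value_char_vec[OF assms(1)] by simp
  qed
  show "mu_minus E a T \<le> cut_value E a T y"
  proof (rule multiaffine_ge_vertex_bound[OF _ _ assms(2)])
    show "mu_minus E a T \<le> cut_value E a T (char_vec U)" for U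
      unfolding vertex by (rule mu_minus_le_cut_weight) blast
  qed (rule cut_value_affine[OF assms(1)])
  show "cut_value E a T y \<le> mu_plus E a T"
  proof (rule multiaffine_le_vertex_bound[OF _ _ assms(2)])
    show "cut_value E a T (char_vec U) \<le> mu_plus E a T" for U
      unfolding vertex by (rule cut_weight_le_mu_plus) blast
  qed (rule cut_value_affine[OF assms(1)])
qed

definition monomial_tangent :: "real^'n \<Rightarrow> real^'n \<Rightarrow> 'n set \<Rightarrow> real" where
  "monomial_tangent x y e = (\<Prod>i\<in>e. x$i) + (\<Sum>i\<in>e. (y$i - x$i) * (\<Prod>j\<in>e - {i}. x$j))"

definition bilin_tangent :: "'n set set \<Rightarrow> ('n set \<Rightarrow> real) \<Rightarrow> real^'n \<Rightarrow> real^'n \<Rightarrow> real" where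
  "bilin_tangent E a x y = (\<Sum>e\<in>E. a e * monomial_tangent x y e)"

lemma bilin_tangent_self: "bilin_tangent E a x x = bilin E a x"
  unfolding bilin_tangent_def monomial_tangent_def bilin_def by simp

lemma monomial_tangent_affine:
  assumes "finite S" "sum u S = 1"
  shows "(\<Sum>p\<in>S. u p * monomial_tangent x (Y p) e) = monomial_tangent x (\<Sum>p\<in>S. u p *\<^sub>R Y p) e"
proof -
  have "(\<Sum>p\<in>S. u p * monomial_tangent x (Y p) e) = (\<Sum>p\<in>S. u p * (\<Prod>i\<in>e. x$i)) +
      (\<Sum>p\<in>S. \<Sum>i\<in>e. u p * ((Y p$i - x$i) * (\<Prod>j\<in>e-{i}. x$j)))"
    unfolding monomial_tangent_def by (simp add: sum.distrib algebra_simps sum_distrib_left)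
  also have "(\<Sum>p\<in>S. \<Sum>i\<in>e. u p * ((Y p$i - x$i) * (\<Prod>j\<in>e-{i}. x$j)))
      = (\<Sum>i\<in>e. (\<Sum>p\<in>S. u p * (Y p$i - x$i)) * (\<Prod>j\<in>e-{i}. x$j))"
    by (subst sum.swap) (simp add: sum_distrib_right mult.assoc)
  also have "\<dots> = (\<Sum>i\<in>e. ((\<Sum>p\<in>S. u p *\<^sub>R Y p)$i - x$i) * (\<Prod>j\<in>e-{i}. x$j))"
    using assms(2) by (simp add: right_diff_distrib sum_subtractf sum_distrib_right[symmetric])
  finally show ?thesis
    unfolding monomial_tangent_def using assms(2) by (simp add: sum_distrib_right[symmetric])
qed

lemma bilin_tangent_affine:
  assumes "finite S" "sum u S = 1"
  shows "(\<Sum>p\<in>S. u p * bilin_tangent E a x (Y p)) = bilin_tangent E a x (\<Sum>p\<in>S. u p *\<^sub>R Y p)"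
proof -
  have "(\<Sum>p\<in>S. u p * bilin_tangent E a x (Y p))
      = (\<Sum>e\<in>E. a e * (\<Sum>p\<in>S. u p * monomial_tangent x (Y p) e))"
    unfolding bilin_tangent_def sum_distrib_left
    by (subst sum.swap) (simp add: mult.left_commute)
  then show ?thesis
    unfolding bilin_tangent_def by (simp add: monomial_tangent_affine[OF assms])
qed

lemma edge_product_on_face:
  fixes x y :: "real^'n"
  assumes "p \<noteq> q" "x$p \<in> {0, 1/2, 1}" "x$q \<in> {0, 1/2, 1}"
    and "x$p \<noteq> 1/2 \<Longrightarrow> y$p = x$p" "x$q \<noteq> 1/2 \<Longrightarrow> y$q = x$q"
  shows "(\<Prod>i\<in>{p, q}. y$i) = monomial_tangent x y {p, q}
    + (if x$p = 1/2 \<and> x$q = 1/2 then 1/4 - edge_cut y {p, q} / 2 else 0)"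
proof -
  have "x$p = 0 \<or> x$p = 1/2 \<or> x$p = 1" "x$q = 0 \<or> x$q = 1/2 \<or> x$q = 1" using assms(2,3) by auto
  then show ?thesis using assms(1,4,5) unfolding monomial_tangent_def edge_cut_def
    by (elim disjE; simp (no_asm_simp) add: insert_Diff_if; simp add: field_simps)
qed

lemma bilin_on_face:
  fixes x y :: "real^'n::finite"
  assumes edges: "\<forall>e\<in>E. card e = 2" and xvals: "\<forall>i. x$i \<in> {0, 1/2, 1}"
    and face: "\<And>i. x$i \<noteq> 1/2 \<Longrightarrow> y$i = x$i"
  defines "Tf \<equiv> {i. x$i = 1/2}"
  shows "bilin E a y = bilin_tangent E a x y + wt a (gamma E Tf) / 4 - cut_value E a Tf y / 2"
proof -
  have "a e * (\<Prod>i\<in>e. y$i) = a e * monomial_tangent x y e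
      + (if e \<in> gamma E Tf then a e else 0) / 4
      - (if e \<in> gamma E Tf then a e * edge_cut y e else 0) / 2" if e: "e \<in> E" for e
  proof -
    obtain p q where pq: "e = {p, q}" "p \<noteq> q" using edges e by (rule edge_doubletonE)
    have "(\<Prod>i\<in>{p, q}. y$i) = monomial_tangent x y {p, q}
        + (if x$p = 1/2 \<and> x$q = 1/2 then 1/4 - edge_cut y {p, q} / 2 else 0)"
      using pq(2) xvals face by (intro edge_product_on_face) auto
    moreover have "e \<in> gamma E Tf \<longleftrightarrow> x$p = 1/2 \<and> x$q = 1/2"
      using e unfolding pq(1) Tf_def by (simp add: doubleton_in_gamma_iff)
    ultimately show ?thesis unfolding pq(1) by (simp add: algebra_simps)
  qed
  then have "bilin E a y = bilin_tangent E a x y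
      + (\<Sum>e\<in>E. if e \<in> gamma E Tf then a e else 0) / 4
      - (\<Sum>e\<in>E. if e \<in> gamma E Tf then a e * edge_cut y e else 0) / 2"
    unfolding bilin_def bilin_tangent_def
    by (simp add: sum.distrib sum_subtractf sum_divide_distrib)
  also have "(\<Sum>e\<in>E. if e \<in> gamma E Tf then a e else 0) = wt a (gamma E Tf)"
    by (rule wt_as_indicator_sum[symmetric]) (auto simp: gamma_def)
  also have "(\<Sum>e\<in>E. if e \<in> gamma E Tf then a e * edge_cut y e else 0) = cut_value E a Tf y"
    unfolding cut_value_def by (simp add: sum.inter_filter gamma_def)
  finally show ?thesis .
qed

lemma bilin_half_integral:
  fixes x :: "real^'n::finite"
  assumes edges: "\<forall>e\<in>E. card e = 2" and xvals: "\<forall>i. x$i \<in> {0, 1/2, 1}"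
  defines "T1 \<equiv> {i. x$i = 1}" and "Tf \<equiv> {i. x$i = 1/2}"
  shows "bilin E a x = wt a (gamma E T1) + wt a (delta E T1 Tf) / 2 + wt a (gamma E Tf) / 4"
proof -
  have "a e * (\<Prod>i\<in>e. x$i) = (if e \<in> gamma E T1 then a e else 0)
      + (if e \<in> delta E T1 Tf then a e else 0) / 2 + (if e \<in> gamma E Tf then a e else 0) / 4"
    if e: "e \<in> E" for e
  proof -
    obtain p q where pq: "e = {p, q}" "p \<noteq> q" using edges e by (rule edge_doubletonE)
    have "x$p = 0 \<or> x$p = 1/2 \<or> x$p = 1" "x$q = 0 \<or> x$q = 1/2 \<or> x$q = 1"
      using xvals by auto
    then show ?thesis
      using e pq(2) unfolding pq(1) T1_def Tf_def
      by (elim disjE; simp (no_asm_simp) add: doubleton_in_gamma_iff doubleton_in_delta_iff)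
  qed
  then have "bilin E a x = (\<Sum>e\<in>E. if e \<in> gamma E T1 then a e else 0)
      + (\<Sum>e\<in>E. if e \<in> delta E T1 Tf then a e else 0) / 2
      + (\<Sum>e\<in>E. if e \<in> gamma E Tf then a e else 0) / 4"
    unfolding bilin_def by (simp add: sum.distrib sum_divide_distrib)
  also have "\<dots> = wt a (gamma E T1) + wt a (delta E T1 Tf) / 2 + wt a (gamma E Tf) / 4"
    by (subst (1 2 3) wt_as_indicator_sum[of E]) (auto simp: gamma_def delta_def)
  finally show ?thesis .
qed

lemma convex_combination_at_endpoint:
  fixes u w :: "'a \<Rightarrow> real"
  assumes S: "finite S" "\<And>p. p \<in> S \<Longrightarrow> 0 \<le> u p" "sum u S = 1"
    and range: "\<And>p. p \<in> S \<Longrightarrow> 0 \<le> w p \<and> w p \<le> 1"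
    and c: "(\<Sum>p\<in>S. u p * w p) = c" "c = 0 \<or> c = 1"
    and p: "p \<in> S" "u p \<noteq> 0"
  shows "w p = c"
proof -
  have vanish: "v p = 0" if "\<And>p. p \<in> S \<Longrightarrow> 0 \<le> v p" "(\<Sum>p\<in>S. u p * v p) = 0" for v
  proof -
    have "u p * v p = 0"
      using sum_nonneg_eq_0_iff[OF S(1), of "\<lambda>p. u p * v p"] that S(2) p(1) by auto
    then show ?thesis using p(2) by simp
  qed
  from c(2) show ?thesis
  proof
    assume "c = 0"
    then show ?thesis using vanish[of w] range c(1) by auto
  next
    assume "c = 1"
    have "(\<Sum>p\<in>S. u p * (1 - w p)) = sum u S - (\<Sum>p\<in>S. u p * w p)"
      by (simp add: right_diff_distrib sum_subtractf)
    then show ?thesis using vanish[of "\<lambda>p. 1 - w p"] range S(3) c(1) \<open>c = 1\<close> by auto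
  qed
qed

lemma convex_combination_le:
  fixes u f :: "'a \<Rightarrow> real"
  assumes "\<And>p. p \<in> S \<Longrightarrow> 0 \<le> u p" "sum u S = 1" "\<And>p. p \<in> S \<Longrightarrow> f p \<le> M"
  shows "(\<Sum>p\<in>S. u p * f p) \<le> M"
proof -
  have "(\<Sum>p\<in>S. u p * f p) \<le> (\<Sum>p\<in>S. u p * M)"
    using assms(1,3) by (intro sum_mono mult_left_mono) auto
  also have "\<dots> = M" using assms(2) by (simp add: sum_distrib_right[symmetric])
  finally show ?thesis .
qed

lemma convex_combination_ge:
  fixes u f :: "'a \<Rightarrow> real"
  assumes "\<And>p. p \<in> S \<Longrightarrow> 0 \<le> u p" "sum u S = 1" "\<And>p. p \<in> S \<Longrightarrow> m \<le> f p"
  shows "m \<le> (\<Sum>p\<in>S. u p * f p)"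
proof -
  have "(\<Sum>p\<in>S. u p * - f p) \<le> - m"
    using assms by (intro convex_combination_le) auto
  then show ?thesis by (simp add: sum_negf)
qed

lemma convex_hull_graph_fibre_bounds:
  fixes x :: "real^'n::finite"
  assumes edges: "\<forall>e\<in>E. card e = 2" and xvals: "\<forall>i. x$i \<in> {0, 1/2, 1}"
    and hull: "(x, z) \<in> convex hull (fgraph (bilin E a))"
  defines "Tf \<equiv> {i. x$i = 1/2}"
  defines "K \<equiv> bilin E a x + wt a (gamma E Tf) / 4"
  shows "K - mu_plus E a Tf / 2 \<le> z" and "z \<le> K - mu_minus E a Tf / 2"
proof -
  obtain S u where S: "finite S" "S \<subseteq> fgraph (bilin E a)" "\<And>p. p \<in> S \<Longrightarrow> 0 \<le> u p"
      "sum u S = 1" "(\<Sum>p\<in>S. u p *\<^sub>R p) = (x, z)"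
    using hull unfolding convex_hull_explicit by blast
  have x_sum: "x = (\<Sum>p\<in>S. u p *\<^sub>R fst p)" and z_sum: "z = (\<Sum>p\<in>S. u p * snd p)"
    using arg_cong[OF S(5), of fst] arg_cong[OF S(5), of snd] by (simp_all add: fst_sum snd_sum)
  have on_graph: "fst p \<in> unit_cube" "snd p = bilin E a (fst p)" if "p \<in> S" for p
    using S(2) that unfolding fgraph_def by auto
  have face: "fst p $ i = x$i" if "p \<in> S" "u p \<noteq> 0" "x$i \<noteq> 1/2" for p i
  proof (rule convex_combination_at_endpoint[OF S(1) S(3) S(4) _ _ _ that(1,2)])
    show "0 \<le> fst q $ i \<and> fst q $ i \<le> 1" if "q \<in> S" for q
      using on_graph(1)[OF that] by (simp add: unit_cube_def)
    show "(\<Sum>q\<in>S. u q * fst q $ i) = x$i" using x_sum by simp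
    show "x$i = 0 \<or> x$i = 1" using xvals that(3) by auto
  qed
  have "z = (\<Sum>p\<in>S. u p * (bilin_tangent E a x (fst p) + wt a (gamma E Tf) / 4
      - cut_value E a Tf (fst p) / 2))"
    unfolding z_sum
  proof (rule sum.cong[OF refl])
    fix p assume "p \<in> S"
    then show "u p * snd p = u p * (bilin_tangent E a x (fst p) + wt a (gamma E Tf) / 4
        - cut_value E a Tf (fst p) / 2)"
      using on_graph(2) bilin_on_face[OF edges xvals face] unfolding Tf_def
      by (cases "u p = 0") auto
  qed
  also have "\<dots> = (\<Sum>p\<in>S. u p * bilin_tangent E a x (fst p)) + wt a (gamma E Tf) / 4
      - (\<Sum>p\<in>S. u p * cut_value E a Tf (fst p)) / 2"
    using S(4) by (simp add: algebra_simps sum.distrib sum_subtractf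
        sum_distrib_right[symmetric] sum_divide_distrib[symmetric])
  also have "(\<Sum>p\<in>S. u p * bilin_tangent E a x (fst p)) = bilin E a x"
    using bilin_tangent_affine[OF S(1) S(4), of E a x fst] x_sum by (simp add: bilin_tangent_self)
  finally have z_eq: "z = K - (\<Sum>p\<in>S. u p * cut_value E a Tf (fst p)) / 2"
    unfolding K_def by simp
  have "(\<Sum>p\<in>S. u p * cut_value E a Tf (fst p)) \<le> mu_plus E a Tf"
    using S(3,4) cut_value_bounds(2)[OF edges on_graph(1)] by (rule convex_combination_le)
  then show "K - mu_plus E a Tf / 2 \<le> z" unfolding z_eq by simp
  have "mu_minus E a Tf \<le> (\<Sum>p\<in>S. u p * cut_value E a Tf (fst p))"
    using S(3,4) cut_value_bounds(1)[OF edges on_graph(1)] by (rule convex_combination_ge)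
  then show "z \<le> K - mu_minus E a Tf / 2" unfolding z_eq by simp
qed

lemma convex_hull_graph_contains_cut_point:
  fixes x :: "real^'n::finite"
  assumes edges: "\<forall>e\<in>E. card e = 2" and xvals: "\<forall>i. x$i \<in> {0, 1/2, 1}"
  defines "T1 \<equiv> {i. x$i = 1}" and "Tf \<equiv> {i. x$i = 1/2}"
  assumes U: "U \<subseteq> Tf"
  shows "(x, bilin E a x + wt a (gamma E Tf) / 4 - wt a (delta E U (Tf - U)) / 2)
    \<in> convex hull (fgraph (bilin E a))"
proof -
  define v where "v = char_vec (T1 \<union> U)"
  define v' where "v' = char_vec (T1 \<union> (Tf - U))"
  have T1_Tf: "T1 \<inter> Tf = {}" unfolding T1_def Tf_def by auto
  have face: "v$i = x$i" "v'$i = x$i" if "x$i \<noteq> 1/2" for i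
    using xvals that U unfolding v_def v'_def char_vec_def T1_def Tf_def by auto
  have x_mid: "x = (1/2) *\<^sub>R v + (1/2) *\<^sub>R v'"
  proof (rule vec_eq_iff[THEN iffD2], intro allI)
    fix i
    show "x$i = ((1/2) *\<^sub>R v + (1/2) *\<^sub>R v') $ i"
    proof (cases "x$i = 1/2")
      case True
      then have "v$i + v'$i = 1"
        using T1_Tf unfolding v_def v'_def char_vec_def T1_def Tf_def by auto
      with True show ?thesis by simp
    qed (simp add: face)
  qed
  have cut_v: "cut_value E a Tf v = wt a (delta E U (Tf - U))"
  proof -
    have "(T1 \<union> U) \<inter> Tf = U" "Tf - (T1 \<union> U) = Tf - U" using T1_Tf U by auto
    then show ?thesis unfolding v_def cut_value_char_vec[OF edges] by simp
  qed
  have cut_v': "cut_value E a Tf v' = wt a (delta E U (Tf - U))"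
  proof -
    have "(T1 \<union> (Tf - U)) \<inter> Tf = Tf - U" "Tf - (T1 \<union> (Tf - U)) = U" using T1_Tf U by auto
    then show ?thesis unfolding v'_def cut_value_char_vec[OF edges] by (simp add: delta_commute)
  qed
  have "bilin_tangent E a x v / 2 + bilin_tangent E a x v' / 2
      = bilin_tangent E a x ((1/2) *\<^sub>R v + (1/2) *\<^sub>R v')"
    using bilin_tangent_affine[of "{True, False}" "\<lambda>_. 1/2" E a x "\<lambda>b. if b then v else v'"]
    by simp
  also have "\<dots> = bilin E a x" by (simp add: x_mid[symmetric] bilin_tangent_self)
  finally have "bilin E a x + wt a (gamma E Tf) / 4 - wt a (delta E U (Tf - U)) / 2
      = (1/2) * bilin E a v + (1/2) * bilin E a v'"
    using bilin_on_face[OF edges xvals face(1), of a, folded Tf_def]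
      bilin_on_face[OF edges xvals face(2), of a, folded Tf_def] cut_v cut_v'
    by linarith
  with x_mid have "(x, bilin E a x + wt a (gamma E Tf) / 4 - wt a (delta E U (Tf - U)) / 2)
      = (1/2) *\<^sub>R (v, bilin E a v) + (1/2) *\<^sub>R (v', bilin E a v')"
    by simp
  also have "\<dots> \<in> convex hull (fgraph (bilin E a))"
    by (rule convexD[OF convex_convex_hull])
      (auto intro!: hull_inc simp: fgraph_def unit_cube_def v_def v'_def char_vec_def)
  finally show ?thesis .
qed

theorem lemma1:
  fixes E :: "('n::finite) set set" and a :: "'n set \<Rightarrow> real" and x :: "real^'n"
  assumes edges: "\<forall>e\<in>E. card e = 2"
    and xvals: "\<forall>i. x$i \<in> {0, 1/2, 1}"
  defines "T1 \<equiv> {i. x$i = 1}" and "Tf \<equiv> {i. x$i = 1/2}"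
  shows "vex (bilin E a) x = wt a (gamma E T1) + wt a (delta E T1 Tf) / 2 + wt a (gamma E Tf) / 2
            - mu_plus E a Tf / 2
       \<and> cav (bilin E a) x = wt a (gamma E T1) + wt a (delta E T1 Tf) / 2 + wt a (gamma E Tf) / 2
            - mu_minus E a Tf / 2
       \<and> chgap (bilin E a) x = (mu_plus E a Tf - mu_minus E a Tf) / 2"
proof -
  define K where "K = bilin E a x + wt a (gamma E Tf) / 4"
  have K_eq: "K = wt a (gamma E T1) + wt a (delta E T1 Tf) / 2 + wt a (gamma E Tf) / 2"
    unfolding K_def bilin_half_integral[OF edges xvals] T1_def Tf_def by simp
  let ?Z = "{z. (x, z) \<in> convex hull (fgraph (bilin E a))}"
  have bounds: "K - mu_plus E a Tf / 2 \<le> z" "z \<le> K - mu_minus E a Tf / 2" if "z \<in> ?Z" for z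
    using convex_hull_graph_fibre_bounds[OF edges xvals] that unfolding K_def Tf_def by auto
  obtain Up where Up: "Up \<subseteq> Tf" "wt a (delta E Up (Tf - Up)) = mu_plus E a Tf"
    by (rule mu_plus_attained)
  have "(x, K - wt a (delta E Up (Tf - Up)) / 2) \<in> convex hull (fgraph (bilin E a))"
    using convex_hull_graph_contains_cut_point[OF edges xvals Up(1)[unfolded Tf_def]]
    unfolding K_def Tf_def .
  then have "K - mu_plus E a Tf / 2 \<in> ?Z" using Up(2) by simp
  then have vex: "vex (bilin E a) x = K - mu_plus E a Tf / 2"
    unfolding vex_def using bounds(1) by (intro cInf_eq_minimum) auto
  obtain Um where Um: "Um \<subseteq> Tf" "wt a (delta E Um (Tf - Um)) = mu_minus E a Tf"
    by (rule mu_minus_attained)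
  have "(x, K - wt a (delta E Um (Tf - Um)) / 2) \<in> convex hull (fgraph (bilin E a))"
    using convex_hull_graph_contains_cut_point[OF edges xvals Um(1)[unfolded Tf_def]]
    unfolding K_def Tf_def .
  then have "K - mu_minus E a Tf / 2 \<in> ?Z" using Um(2) by simp
  then have cav: "cav (bilin E a) x = K - mu_minus E a Tf / 2"
    unfolding cav_def using bounds(2) by (intro cSup_eq_maximum) auto
  show ?thesis unfolding chgap_def vex cav K_eq by simp
qed

end
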